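(* Let $a,b\ge 1$ be integers and let $H$ be a finite simple graph that contains no (not necessarily induced) subgraph isomorphic to the complete bipartite graph $K_{a,b}$. Then $\|\mathcal{N}[H]\|$ strong deformation retracts onto a subspace that is the geometric realization of a simplicial complex of dimension at most $a+b-3$.
   Context: For a graph $G$, the neighborhood complex $\mathcal{N}[G]$ is the simplicial complex on vertex set $V(G)$ whose faces are all subsets of $V(G)$ having a common neighbor (a vertex adjacent to every element of the subset). $\|\Delta\|$ denotes the geometric realization of a simplicial complex $\Delta$. $K_{a,b}$ is the complete bipartite graph with parts of sizes $a$ and $b$. *)

theory Defs
  imports "HOL-Analysis.Analysis"
begin

definition finite_simple_graph :: "'v set \<Rightarrow> ('v \<Rightarrow> 'v \<Rightarrow> bool) \<Rightarrow> bool" where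
  "finite_simple_graph V E \<longleftrightarrow> finite V \<and>
     (\<forall>u v. E u v \<longrightarrow> u \<in> V \<and> v \<in> V) \<and>
     (\<forall>u v. E u v \<longrightarrow> E v u) \<and> (\<forall>v. \<not> E v v)"

definition contains_Kab :: "'v set \<Rightarrow> ('v \<Rightarrow> 'v \<Rightarrow> bool) \<Rightarrow> nat \<Rightarrow> nat \<Rightarrow> bool" where
  "contains_Kab V E a b \<longleftrightarrow> (\<exists>A B. A \<subseteq> V \<and> B \<subseteq> V \<and> A \<inter> B = {} \<and>
     card A = a \<and> card B = b \<and> finite A \<and> finite B \<and> (\<forall>x\<in>A. \<forall>y\<in>B. E x y))"

definition nbhd_complex :: "'v set \<Rightarrow> ('v \<Rightarrow> 'v \<Rightarrow> bool) \<Rightarrow> 'v set set" where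
  "nbhd_complex V E = {\<sigma>. \<sigma> \<subseteq> V \<and> (\<exists>w\<in>V. \<forall>u\<in>\<sigma>. E u w)}"

definition finite_simplicial_complex :: "'v set set \<Rightarrow> bool" where
  "finite_simplicial_complex K \<longleftrightarrow> finite K \<and> (\<forall>\<sigma>\<in>K. finite \<sigma>) \<and>
     (\<forall>\<sigma>\<in>K. \<forall>\<tau>. \<tau> \<subseteq> \<sigma> \<longrightarrow> \<tau> \<in> K)"

text \<open>Dimension at most d, for d = n - 1: every face has at most n vertices.\<close>
definition faces_card_le :: "'v set set \<Rightarrow> nat \<Rightarrow> bool" where
  "faces_card_le K n \<longleftrightarrow> (\<forall>\<sigma>\<in>K. card \<sigma> \<le> n)"

text \<open>Geometric realization of a finite simplicial complex, as a subspace of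
  'v \<Rightarrow> real (product topology): barycentric coordinate functions, nonnegative,
  summing to 1, whose support is a face.\<close>
definition geom_real :: "'v set set \<Rightarrow> ('v \<Rightarrow> real) set" where
  "geom_real K = {x. (\<forall>v. 0 \<le> x v) \<and> {v. x v \<noteq> 0} \<in> K \<and> sum x {v. x v \<noteq> 0} = 1}"

definition strong_deformation_retract_of ::
    "'a::topological_space set \<Rightarrow> 'a set \<Rightarrow> bool" where
  "strong_deformation_retract_of A X \<longleftrightarrow> A \<subseteq> X \<and>
     (\<exists>h :: real \<times> 'a \<Rightarrow> 'a. continuous_on ({0..1} \<times> X) h \<and> h ` ({0..1} \<times> X) \<subseteq> X \<and>
        (\<forall>x\<in>X. h (0, x) = x) \<and> (\<forall>x\<in>X. h (1, x) \<in> A) \<and>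
        (\<forall>t\<in>{0..1}. \<forall>y\<in>A. h (t, y) = y))"

end

theory Submission
  imports Defs
begin

text \<open>Let c be the closure operator sending \<sigma> to the common neighbourhood of its common
  neighbourhood. It maps faces of the neighbourhood complex to faces, and the nonempty faces fixed
  by c form a poset whose order complex embeds in the realisation by sending a vertex to the
  barycentre of its face. A point x of the realisation assigns to every superlevel set \<tau> of x
  the gap between the values of x inside and outside \<tau>, and this weight is credited to c \<tau>.
  Superlevel sets are nested, so the weights live on a chain; normalised, they give a continuous
  retraction onto the embedded order complex that fixes its points, and the straight-line homotopy
  to it stays inside the face c(supp x). In a K_{a,b}-free graph a chain of closed faces has at
  most a - 1 members with fewer than a vertices, and the common neighbourhoods of the remaining
  ones form a chain of nonempty sets with fewer than b elements, so the order complex has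
  dimension at most a + b - 3.\<close>

section \<open>Gaps between superlevel sets\<close>

lemma continuous_on_Min_image:
  fixes f :: "'i \<Rightarrow> 'a::topological_space \<Rightarrow> 'b::linorder_topology"
  assumes "finite T" "T \<noteq> {}" "\<And>i. i \<in> T \<Longrightarrow> continuous_on S (f i)"
  shows "continuous_on S (\<lambda>x. Min ((\<lambda>i. f i x) ` T))"
  using assms by (induction T rule: finite_ne_induct) (auto intro: continuous_on_min)

lemma continuous_on_Max_insert:
  fixes f :: "'i \<Rightarrow> 'a::topological_space \<Rightarrow> 'b::linorder_topology"
  assumes "finite T" "continuous_on S g" "\<And>i. i \<in> T \<Longrightarrow> continuous_on S (f i)"
  shows "continuous_on S (\<lambda>x. Max (insert (g x) ((\<lambda>i. f i x) ` T)))"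
  using assms
proof (induction T rule: finite_induct)
  case (insert a T)
  have "Max (insert (g x) ((\<lambda>i. f i x) ` insert a T))
      = max (f a x) (Max (insert (g x) ((\<lambda>i. f i x) ` T)))" for x
  proof -
    have "insert (g x) ((\<lambda>i. f i x) ` insert a T) = insert (f a x) (insert (g x) ((\<lambda>i. f i x) ` T))"
      by auto
    then show ?thesis
      using insert.hyps by simp
  qed
  then show ?case
    using insert by (simp only:) (intro continuous_on_max; simp)
qed simp

lemma continuous_on_coordinate: "continuous_on S (\<lambda>x. x i)"
  by (rule continuous_on_product_then_coordinatewise[OF continuous_on_id])

text \<open>The gap is positive iff \<tau> is a superlevel set {v \<in> V. x v > h} of x with h \<ge> 0;
  it is then the height of the step of x at \<tau>.\<close>
definition level_gap :: "'v set \<Rightarrow> ('v \<Rightarrow> real) \<Rightarrow> 'v set \<Rightarrow> real" where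
  "level_gap V x \<tau> = max 0 (Min (x ` \<tau>) - Max (insert 0 (x ` (V - \<tau>))))"

lemma level_gap_nonneg: "0 \<le> level_gap V x \<tau>"
  by (simp add: level_gap_def)

lemma continuous_on_level_gap:
  fixes V :: "'v set"
  assumes "finite V" "finite \<tau>" "\<tau> \<noteq> {}"
  shows "continuous_on S (\<lambda>x. level_gap V x \<tau>)"
  unfolding level_gap_def using assms
  by (intro continuous_on_max continuous_on_diff continuous_on_const continuous_on_coordinate
      continuous_on_Min_image continuous_on_Max_insert) auto

lemma level_gap_posD:
  assumes "0 < level_gap V x \<tau>" "finite V" "finite \<tau>" "u \<in> \<tau>"
  shows "0 < x u" and "w \<in> V - \<tau> \<Longrightarrow> x w < x u"
proof -
  have "Max (insert 0 (x ` (V - \<tau>))) < Min (x ` \<tau>)"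
    using assms(1) by (simp add: level_gap_def)
  moreover have "Min (x ` \<tau>) \<le> x u"
    using assms(3,4) by simp
  moreover have "0 \<le> Max (insert 0 (x ` (V - \<tau>)))" "w \<in> V - \<tau> \<Longrightarrow> x w \<le> Max (insert 0 (x ` (V - \<tau>)))"
    using assms(2) by auto
  ultimately show "0 < x u" and "w \<in> V - \<tau> \<Longrightarrow> x w < x u"
    by linarith+
qed

lemma level_gap_pos_nested:
  assumes "finite V" "\<tau> \<subseteq> V" "\<sigma> \<subseteq> V" "0 < level_gap V x \<tau>" "0 < level_gap V x \<sigma>"
  shows "\<tau> \<subseteq> \<sigma> \<or> \<sigma> \<subseteq> \<tau>"
proof (rule ccontr)
  assume "\<not> (\<tau> \<subseteq> \<sigma> \<or> \<sigma> \<subseteq> \<tau>)"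
  then obtain u w where "u \<in> \<tau> - \<sigma>" "w \<in> \<sigma> - \<tau>"
    by blast
  with assms finite_subset have "x w < x u" and "x u < x w"
    by (metis Diff_iff level_gap_posD(2) subsetD)+
  then show False
    by simp
qed

lemma exists_level_gap_pos:
  assumes "finite V" "v \<in> V" "0 < x v"
  obtains \<tau> where "\<tau> \<subseteq> V" "\<tau> \<noteq> {}" "0 < level_gap V x \<tau>"
proof
  define M where "M = Max (x ` V)"
  define \<tau> where "\<tau> = {u \<in> V. x u = M}"
  have "M \<in> x ` V"
    unfolding M_def using assms by (intro Max_in) auto
  then show "\<tau> \<subseteq> V" "\<tau> \<noteq> {}"
    unfolding \<tau>_def by auto
  have "x v \<le> M"
    unfolding M_def using assms by simp
  have "Min (x ` \<tau>) = M"
    using \<open>\<tau> \<noteq> {}\<close> assms(1) unfolding \<tau>_def by (intro Min_eqI) auto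
  moreover have "Max (insert 0 (x ` (V - \<tau>))) < M"
  proof (subst Max_less_iff, simp_all add: assms(1), intro conjI ballI)
    show "0 < M"
      using assms(3) \<open>x v \<le> M\<close> by linarith
    fix w assume "w \<in> V - \<tau>"
    then show "x w < M"
      using assms(1) by (auto simp: \<tau>_def M_def order.strict_iff_order)
  qed
  ultimately show "0 < level_gap V x \<tau>"
    by (simp add: level_gap_def)
qed

lemma chain_subset_subset: "chain\<^sub>\<subseteq> C \<Longrightarrow> D \<subseteq> C \<Longrightarrow> chain\<^sub>\<subseteq> D"
  unfolding chain_subset_def by (meson subsetD)

lemma chain_subset_imageI:
  "(\<And>i j. i \<in> I \<Longrightarrow> j \<in> I \<Longrightarrow> f i \<subseteq> f j \<or> f j \<subseteq> f i) \<Longrightarrow> chain\<^sub>\<subseteq> (f ` I)"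
  by (simp add: chain_subset_def)

lemma chain_witness_inside:
  assumes "finite I" "chain\<^sub>\<subseteq> (f ` I)" "\<tau> \<noteq> {}"
  obtains v where "v \<in> \<tau>" "\<And>j. j \<in> I \<Longrightarrow> v \<in> f j \<longleftrightarrow> \<tau> \<subseteq> f j"
proof (cases "{j \<in> I. \<not> \<tau> \<subseteq> f j} = {}")
  case True
  with assms(3) show ?thesis
    using that by blast
next
  case False
  let ?G = "f ` {j \<in> I. \<not> \<tau> \<subseteq> f j}"
  have "\<Union>?G \<in> ?G"
    using False assms(1,2) by (intro Union_in_chain) (auto simp: chain_subset_def subset.chain_def)
  then obtain v where "v \<in> \<tau>" "v \<notin> \<Union>?G"
    by blast
  then show ?thesis
    using that by blast
qed

lemma chain_witness_outside:
  assumes "finite I" "chain\<^sub>\<subseteq> (f ` I)" "j0 \<in> I" "\<not> f j0 \<subseteq> \<tau>"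
  obtains w where "w \<notin> \<tau>" "\<And>j. j \<in> I \<Longrightarrow> w \<in> f j \<longleftrightarrow> \<not> f j \<subseteq> \<tau>"
proof -
  let ?G = "f ` {j \<in> I. \<not> f j \<subseteq> \<tau>}"
  have "\<Inter>?G \<in> ?G"
    using assms by (intro Inter_in_chain) (auto simp: chain_subset_def subset.chain_def)
  then obtain w where "w \<notin> \<tau>" "w \<in> \<Inter>?G"
    by blast
  then show ?thesis
    using that by blast
qed

lemma Min_chain_sum:
  fixes s :: "'i \<Rightarrow> real"
  assumes "finite I" "chain\<^sub>\<subseteq> (f ` I)" "\<And>j. j \<in> I \<Longrightarrow> 0 \<le> s j" "finite \<tau>" "\<tau> \<noteq> {}"
    and y: "\<And>v. y v = (\<Sum>j\<in>{j \<in> I. v \<in> f j}. s j)"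
  shows "Min (y ` \<tau>) = (\<Sum>j\<in>{j \<in> I. \<tau> \<subseteq> f j}. s j)"
proof (rule antisym)
  obtain v where "v \<in> \<tau>" "\<And>j. j \<in> I \<Longrightarrow> v \<in> f j \<longleftrightarrow> \<tau> \<subseteq> f j"
    using chain_witness_inside[OF assms(1,2,5)] by blast
  then have "{j \<in> I. v \<in> f j} = {j \<in> I. \<tau> \<subseteq> f j}"
    by auto
  moreover have "Min (y ` \<tau>) \<le> y v"
    using \<open>v \<in> \<tau>\<close> assms(4) by (intro Min_le) auto
  ultimately show "Min (y ` \<tau>) \<le> (\<Sum>j\<in>{j \<in> I. \<tau> \<subseteq> f j}. s j)"
    by (simp add: y)
  have "(\<Sum>j\<in>{j \<in> I. \<tau> \<subseteq> f j}. s j) \<le> y u" if "u \<in> \<tau>" for u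
    unfolding y using that assms(1,3) by (intro sum_mono2) auto
  then show "(\<Sum>j\<in>{j \<in> I. \<tau> \<subseteq> f j}. s j) \<le> Min (y ` \<tau>)"
    using assms(4,5) by simp
qed

lemma Max_chain_sum_outside:
  fixes s :: "'i \<Rightarrow> real"
  assumes "finite V" "finite I" "chain\<^sub>\<subseteq> (f ` I)" "\<And>j. j \<in> I \<Longrightarrow> f j \<subseteq> V"
    and "\<And>j. j \<in> I \<Longrightarrow> 0 \<le> s j" and y: "\<And>v. y v = (\<Sum>j\<in>{j \<in> I. v \<in> f j}. s j)"
  shows "Max (insert 0 (y ` (V - \<tau>))) = (\<Sum>j\<in>{j \<in> I. \<not> f j \<subseteq> \<tau>}. s j)"
    (is "_ = ?L")
proof (rule antisym)
  have "0 \<le> ?L"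
    using assms(5) by (intro sum_nonneg) auto
  moreover have "y w \<le> ?L" if "w \<notin> \<tau>" for w
    unfolding y using that assms(2,5) by (intro sum_mono2) auto
  ultimately show "Max (insert 0 (y ` (V - \<tau>))) \<le> ?L"
    using assms(1) by simp
  show "?L \<le> Max (insert 0 (y ` (V - \<tau>)))"
  proof (cases "\<exists>j0\<in>I. \<not> f j0 \<subseteq> \<tau>")
    case True
    then obtain j0 w where "j0 \<in> I" "\<not> f j0 \<subseteq> \<tau>" "w \<notin> \<tau>"
      and w: "\<And>j. j \<in> I \<Longrightarrow> w \<in> f j \<longleftrightarrow> \<not> f j \<subseteq> \<tau>"
      by (metis chain_witness_outside[OF assms(2,3)])
    then have "w \<in> V" "{j \<in> I. w \<in> f j} = {j \<in> I. \<not> f j \<subseteq> \<tau>}"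
      using assms(4) by auto
    then have "w \<in> V - \<tau>" "?L = y w"
      using \<open>w \<notin> \<tau>\<close> by (simp_all add: y)
    with assms(1) show ?thesis
      by simp
  next
    case False
    then have "{j \<in> I. \<not> f j \<subseteq> \<tau>} = {}"
      by blast
    then have "?L = 0"
      by (simp only: sum.empty)
    with assms(1) show ?thesis
      by simp
  qed
qed

lemma level_gap_chain_sum:
  fixes s :: "'i \<Rightarrow> real"
  assumes "finite V" "finite I" "chain\<^sub>\<subseteq> (f ` I)" "\<And>j. j \<in> I \<Longrightarrow> f j \<subseteq> V"
    and "\<And>j. j \<in> I \<Longrightarrow> 0 \<le> s j" and "finite \<tau>" "\<tau> \<noteq> {}"
  defines "y \<equiv> \<lambda>v. \<Sum>j\<in>{j \<in> I. v \<in> f j}. s j"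
  shows "level_gap V y \<tau> = (\<Sum>j\<in>{j \<in> I. f j = \<tau>}. s j)"
proof -
  let ?U = "\<Sum>j\<in>{j \<in> I. \<tau> \<subseteq> f j}. s j" and ?L = "\<Sum>j\<in>{j \<in> I. \<not> f j \<subseteq> \<tau>}. s j"
  have y: "y v = (\<Sum>j\<in>{j \<in> I. v \<in> f j}. s j)" for v
    by (simp add: y_def)
  have "level_gap V y \<tau> = max 0 (?U - ?L)"
    using Min_chain_sum[OF assms(2,3,5-7) y] Max_chain_sum_outside[OF assms(1-5) y]
    by (simp only: level_gap_def)
  also have "\<dots> = (\<Sum>j\<in>{j \<in> I. f j = \<tau>}. s j)"
  proof (cases "\<tau> \<in> f ` I")
    case True
    then have split: "{j \<in> I. \<tau> \<subseteq> f j} = {j \<in> I. f j = \<tau>} \<union> {j \<in> I. \<not> f j \<subseteq> \<tau>}"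
      using assms(3) by (auto simp: chain_subset_def)
    have "?U = (\<Sum>j\<in>{j \<in> I. f j = \<tau>}. s j) + ?L"
      unfolding split using assms(2) by (intro sum.union_disjoint) auto
    moreover have "0 \<le> (\<Sum>j\<in>{j \<in> I. f j = \<tau>}. s j)"
      using assms(5) by (intro sum_nonneg) auto
    ultimately show ?thesis
      by simp
  next
    case False
    then have "{j \<in> I. \<tau> \<subseteq> f j} \<subseteq> {j \<in> I. \<not> f j \<subseteq> \<tau>}"
      by auto
    then have "?U \<le> ?L"
      using assms(2,5) by (intro sum_mono2) auto
    moreover have "{j \<in> I. f j = \<tau>} = {}"
      using False by auto
    then have "(\<Sum>j\<in>{j \<in> I. f j = \<tau>}. s j) = 0"
      by (simp only: sum.empty)
    ultimately show ?thesis
      by (simp add: max_def)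
  qed
  finally show ?thesis .
qed

section \<open>Retracting a complex onto the order complex of its closed faces\<close>

lemma mem_geom_real_iff:
  assumes "finite W" "\<And>\<sigma>. \<sigma> \<in> K \<Longrightarrow> \<sigma> \<subseteq> W"
  shows "x \<in> geom_real K \<longleftrightarrow> (\<forall>v. 0 \<le> x v) \<and> {v. x v \<noteq> 0} \<in> K \<and> sum x W = 1"
proof -
  have "sum x {v. x v \<noteq> 0} = sum x W" if "{v. x v \<noteq> 0} \<in> K"
    using that assms by (intro sum.mono_neutral_left) auto
  then show ?thesis
    unfolding geom_real_def by auto
qed

definition barycenter :: "'v set \<Rightarrow> 'v \<Rightarrow> real" where
  "barycenter \<sigma> v = (if v \<in> \<sigma> then 1 / card \<sigma> else 0)"

lemma sum_barycenter:
  assumes "finite W" "\<sigma> \<subseteq> W" "\<sigma> \<noteq> {}"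
  shows "sum (barycenter \<sigma>) W = 1"
proof -
  have "sum (barycenter \<sigma>) W = (\<Sum>v\<in>\<sigma>. 1 / card \<sigma>)"
    unfolding barycenter_def using assms(1,2)
    by (simp add: sum.If_cases Int_absorb1)
  also have "\<dots> = 1"
    using assms finite_subset[OF assms(2,1)] by simp
  finally show ?thesis .
qed

definition closed_faces :: "'v set set \<Rightarrow> ('v set \<Rightarrow> 'v set) \<Rightarrow> 'v set set" where
  "closed_faces \<Delta> c = {\<sigma> \<in> \<Delta>. \<sigma> \<noteq> {} \<and> c \<sigma> = \<sigma>}"

locale face_closure =
  fixes V :: "'v set" and \<Delta> :: "'v set set" and c :: "'v set \<Rightarrow> 'v set"
  assumes finite_vertices: "finite V"
    and face_subset: "\<sigma> \<in> \<Delta> \<Longrightarrow> \<sigma> \<subseteq> V"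
    and face_downward: "\<sigma> \<in> \<Delta> \<Longrightarrow> \<tau> \<subseteq> \<sigma> \<Longrightarrow> \<tau> \<in> \<Delta>"
    and closure_face: "\<sigma> \<in> \<Delta> \<Longrightarrow> c \<sigma> \<in> \<Delta>"
    and closure_extensive: "\<sigma> \<in> \<Delta> \<Longrightarrow> \<sigma> \<subseteq> c \<sigma>"
    and closure_mono: "\<sigma> \<in> \<Delta> \<Longrightarrow> \<tau> \<subseteq> \<sigma> \<Longrightarrow> c \<tau> \<subseteq> c \<sigma>"
    and closure_idem: "\<sigma> \<in> \<Delta> \<Longrightarrow> c (c \<sigma>) = c \<sigma>"
begin

lemma finite_face: "\<sigma> \<in> \<Delta> \<Longrightarrow> finite \<sigma>"
  using face_subset finite_vertices finite_subset by blast

lemma finite_faces: "finite \<Delta>"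
proof -
  have "\<Delta> \<subseteq> Pow V"
    using face_subset by auto
  then show ?thesis
    by (rule finite_subset) (simp add: finite_vertices)
qed

lemma closure_closed_face: "\<sigma> \<in> \<Delta> \<Longrightarrow> \<sigma> \<noteq> {} \<Longrightarrow> c \<sigma> \<in> closed_faces \<Delta> c"
  unfolding closed_faces_def using closure_face closure_extensive closure_idem by blast

lemma mem_geom_real_faces_iff:
  "x \<in> geom_real \<Delta> \<longleftrightarrow> (\<forall>v. 0 \<le> x v) \<and> {v. x v \<noteq> 0} \<in> \<Delta> \<and> sum x V = 1"
  using mem_geom_real_iff[OF finite_vertices face_subset] .

lemma geom_real_support_nonempty:
  assumes "x \<in> geom_real \<Delta>"
  obtains v where "v \<in> V" "0 < x v"
proof -
  have "sum x V = 1" "\<forall>v. 0 \<le> x v" "{v. x v \<noteq> 0} \<subseteq> V"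
    using assms face_subset by (auto simp: mem_geom_real_faces_iff)
  then obtain v where "x v \<noteq> 0"
    by (metis sum.neutral zero_neq_one)
  then show ?thesis
    using that \<open>\<forall>v. 0 \<le> x v\<close> \<open>{v. x v \<noteq> 0} \<subseteq> V\<close> by (simp add: less_le subset_iff)
qed

lemma level_gap_pos_face:
  assumes "x \<in> geom_real \<Delta>" "finite \<tau>" "0 < level_gap V x \<tau>"
  shows "\<tau> \<subseteq> {v. x v \<noteq> 0}" "\<tau> \<in> \<Delta>"
proof -
  show "\<tau> \<subseteq> {v. x v \<noteq> 0}"
    using level_gap_posD(1)[OF assms(3) finite_vertices assms(2)] by force
  then show "\<tau> \<in> \<Delta>"
    using assms(1) face_downward by (auto simp: mem_geom_real_faces_iff)
qed

end

locale enumerated_face_closure = face_closure +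
  fixes e :: "nat \<Rightarrow> 'v set" and n :: nat
  assumes enumeration: "bij_betw e {..<n} (closed_faces \<Delta> c)"
begin

lemma enum_closed: "i < n \<Longrightarrow> e i \<in> closed_faces \<Delta> c"
  using enumeration by (auto simp: bij_betw_def)

lemma enum_face: "i < n \<Longrightarrow> e i \<in> \<Delta>" and enum_nonempty: "i < n \<Longrightarrow> e i \<noteq> {}"
  and enum_fixed: "i < n \<Longrightarrow> c (e i) = e i"
  using enum_closed by (auto simp: closed_faces_def)

lemma enum_inj: "inj_on e {..<n}"
  using enumeration by (auto simp: bij_betw_def)

lemma enum_surj: "\<sigma> \<in> closed_faces \<Delta> c \<Longrightarrow> \<exists>i<n. e i = \<sigma>"
  using enumeration by (metis bij_betw_def imageE lessThan_iff)

lemma card_enum_pos: "i < n \<Longrightarrow> 0 < card (e i)"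
  using enum_face enum_nonempty finite_face by (simp add: card_gt_0_iff)

definition order_complex :: "nat set set" where
  "order_complex = {I. I \<subseteq> {..<n} \<and> chain\<^sub>\<subseteq> (e ` I)}"

lemma finite_simplicial_complex_order_complex: "finite_simplicial_complex order_complex"
proof -
  have "order_complex \<subseteq> Pow {..<n}"
    by (auto simp: order_complex_def)
  moreover have "\<tau> \<in> order_complex" if "\<sigma> \<in> order_complex" "\<tau> \<subseteq> \<sigma>" for \<sigma> \<tau>
    using that chain_subset_subset[OF _ image_mono] by (auto simp: order_complex_def)
  ultimately show ?thesis
    unfolding finite_simplicial_complex_def by (meson Pow_iff finite_Pow_iff finite_lessThan finite_subset subsetD)
qed

lemma order_complex_chain:
  assumes "I \<in> order_complex"
  shows "e ` I \<subseteq> closed_faces \<Delta> c" "chain\<^sub>\<subseteq> (e ` I)" "card (e ` I) = card I"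
  using assms enum_closed card_image[OF inj_on_subset[OF enum_inj]] by (auto simp: order_complex_def)

lemma mem_geom_real_order_complex_iff:
  "t \<in> geom_real order_complex \<longleftrightarrow>
     (\<forall>i. 0 \<le> t i) \<and> {i. t i \<noteq> 0} \<in> order_complex \<and> sum t {..<n} = 1"
  by (rule mem_geom_real_iff) (auto simp: order_complex_def)

definition bary_embed :: "(nat \<Rightarrow> real) \<Rightarrow> 'v \<Rightarrow> real" where
  "bary_embed t v = (\<Sum>i<n. t i * barycenter (e i) v)"

definition bary_coords :: "('v \<Rightarrow> real) \<Rightarrow> nat \<Rightarrow> real" where
  "bary_coords y i = (if i < n then card (e i) * level_gap V y (e i) else 0)"

lemma bary_embed_nonneg: "(\<And>i. 0 \<le> t i) \<Longrightarrow> 0 \<le> bary_embed t v"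
  unfolding bary_embed_def barycenter_def by (intro sum_nonneg) auto

lemma sum_bary_embed: "sum (bary_embed t) V = sum t {..<n}"
proof -
  have "sum (bary_embed t) V = (\<Sum>i<n. t i * sum (barycenter (e i)) V)"
    unfolding bary_embed_def by (subst sum.swap) (simp add: sum_distrib_left)
  also have "\<dots> = sum t {..<n}"
    using sum_barycenter[OF finite_vertices] face_subset enum_face enum_nonempty by simp
  finally show ?thesis .
qed

lemma bary_embed_nonzeroD:
  assumes "bary_embed t v \<noteq> 0"
  obtains i where "i < n" "t i \<noteq> 0" "v \<in> e i"
proof -
  obtain i where "i < n" "t i * barycenter (e i) v \<noteq> 0"
    using assms unfolding bary_embed_def by (meson lessThan_iff sum.neutral)
  then show ?thesis
    using that by (auto simp: barycenter_def split: if_splits)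
qed

lemma bary_embed_chain_sum:
  assumes "{i. t i \<noteq> 0} \<subseteq> {..<n}"
  shows "bary_embed t v = (\<Sum>j\<in>{j \<in> {i. t i \<noteq> 0}. v \<in> e j}. t j / card (e j))"
proof -
  let ?S = "{i. t i \<noteq> 0}"
  have "bary_embed t v = (\<Sum>i\<in>?S. t i * barycenter (e i) v)"
    unfolding bary_embed_def using assms by (intro sum.mono_neutral_right) auto
  also have "\<dots> = (\<Sum>i\<in>?S. if v \<in> e i then t i / card (e i) else 0)"
    by (intro sum.cong) (auto simp: barycenter_def)
  also have "\<dots> = (\<Sum>j\<in>{j \<in> ?S. v \<in> e j}. t j / card (e j))"
    using assms finite_subset by (intro sum.inter_filter[symmetric]) blast
  finally show ?thesis .
qed

lemma level_gap_bary_embed: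
  assumes "t \<in> geom_real order_complex" "finite \<tau>" "\<tau> \<noteq> {}"
  shows "level_gap V (bary_embed t) \<tau> = (\<Sum>j\<in>{j \<in> {i. t i \<noteq> 0}. e j = \<tau>}. t j / card (e j))"
proof -
  let ?S = "{i. t i \<noteq> 0}"
  have t: "\<forall>i. 0 \<le> t i" "?S \<subseteq> {..<n}" "chain\<^sub>\<subseteq> (e ` ?S)"
    using assms(1) unfolding mem_geom_real_order_complex_iff by (auto simp: order_complex_def)
  then have "finite ?S"
    using finite_subset by blast
  then show ?thesis
    unfolding bary_embed_chain_sum[OF t(2)]
    using t face_subset enum_face assms(2,3)
    by (intro level_gap_chain_sum finite_vertices) auto
qed

lemma level_gap_bary_embed_enum:
  assumes "t \<in> geom_real order_complex" "i < n"
  shows "level_gap V (bary_embed t) (e i) = t i / card (e i)"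
proof -
  have "{j \<in> {i. t i \<noteq> 0}. e j = e i} = (if t i = 0 then {} else {i})"
    using assms enum_inj unfolding mem_geom_real_order_complex_iff by (auto simp: order_complex_def inj_on_def)
  then show ?thesis
    using level_gap_bary_embed[OF assms(1)] assms(2) enum_face enum_nonempty finite_face by simp
qed

lemma level_gap_bary_embed_not_closed:
  assumes "t \<in> geom_real order_complex" "finite \<tau>" "\<tau> \<noteq> {}" "\<tau> \<notin> closed_faces \<Delta> c"
  shows "level_gap V (bary_embed t) \<tau> = 0"
proof -
  have "{j \<in> {i. t i \<noteq> 0}. e j = \<tau>} = {}"
    using assms(1,4) enum_closed unfolding mem_geom_real_order_complex_iff by (auto simp: order_complex_def)
  then show ?thesis
    unfolding level_gap_bary_embed[OF assms(1-3)] by (simp only: sum.empty)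
qed

lemma bary_coords_bary_embed:
  assumes "t \<in> geom_real order_complex"
  shows "bary_coords (bary_embed t) = t"
proof
  fix i
  show "bary_coords (bary_embed t) i = t i"
    using assms level_gap_bary_embed_enum card_enum_pos unfolding mem_geom_real_order_complex_iff
    by (auto simp: bary_coords_def order_complex_def)
qed

lemma bary_embed_in_geom_real:
  assumes "t \<in> geom_real order_complex"
  shows "bary_embed t \<in> geom_real \<Delta>"
proof -
  let ?S = "{i. t i \<noteq> 0}"
  have t: "\<forall>i. 0 \<le> t i" "?S \<subseteq> {..<n}" "chain\<^sub>\<subseteq> (e ` ?S)" "sum t {..<n} = 1"
    using assms unfolding mem_geom_real_order_complex_iff by (auto simp: order_complex_def)
  have "?S \<noteq> {}"
  proof
    assume "?S = {}"
    then have "sum t {..<n} = 0"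
      by simp
    with t(4) show False
      by simp
  qed
  moreover have "finite ?S"
    using t(2) finite_subset by blast
  ultimately have "\<Union>(e ` ?S) \<in> e ` ?S"
    using t(3) by (intro Union_in_chain) (auto simp: chain_subset_alt_def)
  then obtain i where "i \<in> ?S" "\<Union>(e ` ?S) = e i"
    by (rule imageE)
  then have top: "\<Union>(e ` ?S) \<in> \<Delta>"
    using t(2) enum_face by auto
  have "v \<in> \<Union>(e ` ?S)" if "bary_embed t v \<noteq> 0" for v
    by (rule bary_embed_nonzeroD[OF that]) auto
  then have "{v. bary_embed t v \<noteq> 0} \<subseteq> \<Union>(e ` ?S)"
    by blast
  then have "{v. bary_embed t v \<noteq> 0} \<in> \<Delta>"
    by (rule face_downward[OF top])
  moreover have "\<forall>v. 0 \<le> bary_embed t v"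
    using t(1) bary_embed_nonneg by blast
  ultimately show ?thesis
    unfolding mem_geom_real_faces_iff sum_bary_embed using t(4) by blast
qed

text \<open>The factor card \<tau> undoes the normalisation of the barycentre, so that on the image
  of bary_embed these weights are the original coordinates.\<close>
definition closure_weight :: "('v \<Rightarrow> real) \<Rightarrow> nat \<Rightarrow> real" where
  "closure_weight x i = (\<Sum>\<tau>\<in>{\<tau> \<in> \<Delta>. \<tau> \<noteq> {} \<and> c \<tau> = e i}. card \<tau> * level_gap V x \<tau>)"

definition retract_coords :: "('v \<Rightarrow> real) \<Rightarrow> nat \<Rightarrow> real" where
  "retract_coords x i = (if i < n then closure_weight x i / (\<Sum>j<n. closure_weight x j) else 0)"

lemma closure_weight_nonneg: "0 \<le> closure_weight x i"
  unfolding closure_weight_def by (intro sum_nonneg mult_nonneg_nonneg level_gap_nonneg) simp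

lemma closure_weight_nonzeroD:
  assumes "closure_weight x i \<noteq> 0"
  obtains \<tau> where "\<tau> \<in> \<Delta>" "\<tau> \<noteq> {}" "c \<tau> = e i" "0 < level_gap V x \<tau>"
proof -
  obtain \<tau> where \<tau>: "\<tau> \<in> {\<tau> \<in> \<Delta>. \<tau> \<noteq> {} \<and> c \<tau> = e i}"
    and nz: "card \<tau> * level_gap V x \<tau> \<noteq> 0"
    using assms unfolding closure_weight_def by (rule sum.not_neutral_contains_not_neutral)
  from nz have "0 < level_gap V x \<tau>"
    using level_gap_nonneg[of V x \<tau>] by (metis mult_zero_right order_le_neq_trans)
  with \<tau> show ?thesis
    by (intro that) auto
qed

lemma closure_weight_bary_embed:
  assumes "t \<in> geom_real order_complex" "i < n"
  shows "closure_weight (bary_embed t) i = t i"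
proof -
  have "card \<tau> * level_gap V (bary_embed t) \<tau> = (if \<tau> = e i then t i else 0)"
    if "\<tau> \<in> \<Delta>" "\<tau> \<noteq> {}" "c \<tau> = e i" for \<tau>
  proof (cases "\<tau> = e i")
    case True
    then show ?thesis
      using level_gap_bary_embed_enum[OF assms] card_enum_pos[OF assms(2)] by simp
  next
    case False
    then have "\<tau> \<notin> closed_faces \<Delta> c"
      using that by (auto simp: closed_faces_def)
    then show ?thesis
      using False that level_gap_bary_embed_not_closed[OF assms(1)] finite_face by simp
  qed
  then have "closure_weight (bary_embed t) i
      = (\<Sum>\<tau>\<in>{\<tau> \<in> \<Delta>. \<tau> \<noteq> {} \<and> c \<tau> = e i}. if \<tau> = e i then t i else 0)"
    unfolding closure_weight_def by (intro sum.cong) auto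
  also have "\<dots> = t i"
    using finite_faces enum_face[OF assms(2)] enum_nonempty[OF assms(2)] enum_fixed[OF assms(2)]
    by (simp add: sum.delta')
  finally show ?thesis .
qed

lemma retract_coords_bary_embed:
  assumes "t \<in> geom_real order_complex"
  shows "retract_coords (bary_embed t) = t"
proof
  fix i
  have "t i = 0" if "\<not> i < n"
    using assms that unfolding mem_geom_real_order_complex_iff by (auto simp: order_complex_def)
  moreover have "(\<Sum>j<n. closure_weight (bary_embed t) j) = 1"
    using assms closure_weight_bary_embed by (simp add: mem_geom_real_order_complex_iff)
  ultimately show "retract_coords (bary_embed t) i = t i"
    unfolding retract_coords_def using closure_weight_bary_embed[OF assms] by simp
qed

lemma closure_weight_total_pos:
  assumes "x \<in> geom_real \<Delta>"
  shows "0 < (\<Sum>j<n. closure_weight x j)"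
proof -
  obtain v where "v \<in> V" "0 < x v"
    using geom_real_support_nonempty[OF assms] .
  with finite_vertices obtain \<tau> where \<tau>: "\<tau> \<subseteq> V" "\<tau> \<noteq> {}" "0 < level_gap V x \<tau>"
    by (rule exists_level_gap_pos)
  have "finite \<tau>"
    using \<tau>(1) finite_vertices by (rule finite_subset)
  have "\<tau> \<in> \<Delta>"
    by (rule level_gap_pos_face(2)[OF assms \<open>finite \<tau>\<close> \<tau>(3)])
  then obtain i where i: "i < n" "e i = c \<tau>"
    using enum_surj[OF closure_closed_face] \<tau>(2) by metis
  have "0 < card \<tau> * level_gap V x \<tau>"
    using \<open>finite \<tau>\<close> \<tau>(2,3) by (simp add: card_gt_0_iff)
  also have "\<dots> \<le> closure_weight x i"
    unfolding closure_weight_def using finite_faces \<open>\<tau> \<in> \<Delta>\<close> \<tau>(2) i(2)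
    by (intro member_le_sum mult_nonneg_nonneg level_gap_nonneg) auto
  also have "\<dots> \<le> (\<Sum>j<n. closure_weight x j)"
    using i(1) closure_weight_nonneg by (intro member_le_sum) auto
  finally show ?thesis .
qed

lemma retract_coords_nonzeroD:
  assumes "x \<in> geom_real \<Delta>" "retract_coords x i \<noteq> 0"
  obtains \<tau> where "\<tau> \<subseteq> {v. x v \<noteq> 0}" "c \<tau> = e i" "0 < level_gap V x \<tau>"
proof -
  have "closure_weight x i \<noteq> 0"
    using assms(2) unfolding retract_coords_def by (auto split: if_splits)
  then obtain \<tau> where "\<tau> \<in> \<Delta>" "c \<tau> = e i" "0 < level_gap V x \<tau>"
    by (rule closure_weight_nonzeroD)
  moreover from this have "\<tau> \<subseteq> {v. x v \<noteq> 0}"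
    using level_gap_pos_face(1)[OF assms(1)] finite_face by blast
  ultimately show ?thesis
    using that by blast
qed

lemma retract_coords_support:
  assumes "x \<in> geom_real \<Delta>" "retract_coords x i \<noteq> 0"
  shows "i < n" "e i \<subseteq> c {v. x v \<noteq> 0}"
proof -
  show "i < n"
    using assms(2) by (auto simp: retract_coords_def split: if_splits)
  obtain \<tau> where "\<tau> \<subseteq> {v. x v \<noteq> 0}" "c \<tau> = e i"
    using retract_coords_nonzeroD[OF assms] by metis
  moreover have "{v. x v \<noteq> 0} \<in> \<Delta>"
    using assms(1) by (simp add: mem_geom_real_faces_iff)
  ultimately show "e i \<subseteq> c {v. x v \<noteq> 0}"
    using closure_mono[of "{v. x v \<noteq> 0}" \<tau>] by auto
qed

lemma retract_coords_in_geom_real: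
  assumes "x \<in> geom_real \<Delta>"
  shows "retract_coords x \<in> geom_real order_complex"
proof -
  have "e i \<subseteq> e j \<or> e j \<subseteq> e i" if nz: "retract_coords x i \<noteq> 0" "retract_coords x j \<noteq> 0" for i j
  proof -
    obtain \<tau> where \<tau>: "\<tau> \<subseteq> {v. x v \<noteq> 0}" "c \<tau> = e i" "0 < level_gap V x \<tau>"
      by (rule retract_coords_nonzeroD[OF assms nz(1)])
    obtain \<sigma> where \<sigma>: "\<sigma> \<subseteq> {v. x v \<noteq> 0}" "c \<sigma> = e j" "0 < level_gap V x \<sigma>"
      by (rule retract_coords_nonzeroD[OF assms nz(2)])
    have "\<tau> \<in> \<Delta>" "\<sigma> \<in> \<Delta>"
      using \<tau> \<sigma> assms face_downward by (auto simp: mem_geom_real_faces_iff)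
    then have "\<tau> \<subseteq> \<sigma> \<or> \<sigma> \<subseteq> \<tau>"
      using level_gap_pos_nested[OF finite_vertices _ _ \<tau>(3) \<sigma>(3)] face_subset by blast
    then show ?thesis
      using closure_mono \<open>\<tau> \<in> \<Delta>\<close> \<open>\<sigma> \<in> \<Delta>\<close> unfolding \<tau>(2)[symmetric] \<sigma>(2)[symmetric] by blast
  qed
  then have "{i. retract_coords x i \<noteq> 0} \<in> order_complex"
    unfolding order_complex_def using retract_coords_support(1)[OF assms]
    by (auto intro: chain_subset_imageI)
  moreover have "sum (retract_coords x) {..<n} = 1"
    using closure_weight_total_pos[OF assms]
    by (simp add: retract_coords_def sum_divide_distrib[symmetric])
  moreover have "0 \<le> retract_coords x i" for i
    using closure_weight_total_pos[OF assms] closure_weight_nonneg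
    by (simp add: retract_coords_def sum_nonneg)
  ultimately show ?thesis
    unfolding mem_geom_real_order_complex_iff by blast
qed

definition retraction_homotopy :: "real \<times> ('v \<Rightarrow> real) \<Rightarrow> 'v \<Rightarrow> real" where
  "retraction_homotopy = (\<lambda>(s, x) v. (1 - s) * x v + s * bary_embed (retract_coords x) v)"

lemma retraction_homotopy_in_geom_real:
  assumes "x \<in> geom_real \<Delta>" "s \<in> {0..1}"
  shows "retraction_homotopy (s, x) \<in> geom_real \<Delta>"
proof -
  let ?S = "{v. x v \<noteq> 0}"
  let ?y = "bary_embed (retract_coords x)"
  have x: "\<forall>v. 0 \<le> x v" "?S \<in> \<Delta>" "sum x V = 1"
    using assms(1) unfolding mem_geom_real_faces_iff by auto
  have y: "\<forall>v. 0 \<le> ?y v" "sum ?y V = 1"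
    using retract_coords_in_geom_real[OF assms(1)] bary_embed_in_geom_real
    unfolding mem_geom_real_faces_iff by blast+
  have "v \<in> c ?S" if "?y v \<noteq> 0" for v
  proof (rule bary_embed_nonzeroD[OF that])
    fix i assume "retract_coords x i \<noteq> 0" "v \<in> e i"
    then show "v \<in> c ?S"
      using retract_coords_support(2)[OF assms(1)] by blast
  qed
  moreover have "?S \<subseteq> c ?S"
    using closure_extensive[OF x(2)] .
  moreover have "x v \<noteq> 0 \<or> ?y v \<noteq> 0" if "retraction_homotopy (s, x) v \<noteq> 0" for v
    using that by (auto simp: retraction_homotopy_def)
  ultimately have "{v. retraction_homotopy (s, x) v \<noteq> 0} \<subseteq> c ?S"
    by blast
  then have "{v. retraction_homotopy (s, x) v \<noteq> 0} \<in> \<Delta>"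
    using face_downward closure_face[OF x(2)] by blast
  moreover have "\<forall>v. 0 \<le> retraction_homotopy (s, x) v"
    using assms(2) x(1) y(1) unfolding retraction_homotopy_def by simp
  moreover have "sum (retraction_homotopy (s, x)) V = 1"
    using x(3) y(2) unfolding retraction_homotopy_def
    by (simp add: sum.distrib sum_distrib_left[symmetric])
  ultimately show ?thesis
    unfolding mem_geom_real_faces_iff by blast
qed

lemma continuous_on_bary_embed: "continuous_on S bary_embed"
proof (intro continuous_on_coordinatewise_then_product)
  fix v
  show "continuous_on S (\<lambda>t. bary_embed t v)"
    unfolding bary_embed_def
    by (intro continuous_on_sum continuous_on_mult continuous_on_const continuous_on_coordinate)
qed

lemma continuous_on_bary_coords: "continuous_on S bary_coords"
proof (intro continuous_on_coordinatewise_then_product)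
  fix i
  show "continuous_on S (\<lambda>y. bary_coords y i)"
    unfolding bary_coords_def
    using enum_face enum_nonempty finite_face
    by (cases "i < n") (auto intro!: continuous_on_mult continuous_on_level_gap finite_vertices)
qed

lemma continuous_on_closure_weight: "continuous_on S (\<lambda>x. closure_weight x i)"
  unfolding closure_weight_def
  by (intro continuous_on_sum continuous_on_mult continuous_on_const continuous_on_level_gap
      finite_vertices) (auto intro: finite_face)

lemma continuous_on_retract_coords: "continuous_on (geom_real \<Delta>) retract_coords"
proof (intro continuous_on_coordinatewise_then_product)
  fix i
  have "continuous_on (geom_real \<Delta>) (\<lambda>x. closure_weight x i / (\<Sum>j<n. closure_weight x j))"
    using closure_weight_total_pos
    by (intro continuous_on_divide continuous_on_sum continuous_on_closure_weight) force
  then show "continuous_on (geom_real \<Delta>) (\<lambda>x. retract_coords x i)"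
    unfolding retract_coords_def by (cases "i < n") auto
qed

lemma continuous_on_retraction_homotopy:
  "continuous_on ({0..1} \<times> geom_real \<Delta>) retraction_homotopy"
proof (intro continuous_on_coordinatewise_then_product)
  fix v
  have "continuous_on ({0..1} \<times> geom_real \<Delta>) (\<lambda>p. retract_coords (snd p))"
    by (rule continuous_on_compose2[OF continuous_on_retract_coords continuous_on_snd[OF continuous_on_id]])
      auto
  then have "continuous_on ({0..1} \<times> geom_real \<Delta>) (\<lambda>p. bary_embed (retract_coords (snd p)))"
    by (rule continuous_on_compose2[OF continuous_on_bary_embed[of UNIV]]) simp
  then have "continuous_on ({0..1} \<times> geom_real \<Delta>) (\<lambda>p. bary_embed (retract_coords (snd p)) v)"
    by (rule continuous_on_product_then_coordinatewise)
  moreover have "continuous_on ({0..1} \<times> geom_real \<Delta>) (\<lambda>p. snd p v)"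
    by (rule continuous_on_compose2[OF continuous_on_coordinate[of UNIV] continuous_on_snd[OF continuous_on_id]]) simp
  ultimately show "continuous_on ({0..1} \<times> geom_real \<Delta>) (\<lambda>p. retraction_homotopy p v)"
    unfolding retraction_homotopy_def case_prod_beta
    by (intro continuous_on_add continuous_on_mult continuous_on_diff continuous_on_const
        continuous_on_fst continuous_on_id)
qed

theorem strong_deformation_retract_bary_embed:
  "strong_deformation_retract_of (bary_embed ` geom_real order_complex) (geom_real \<Delta>)"
  unfolding strong_deformation_retract_of_def
proof (intro conjI exI[of _ retraction_homotopy] ballI)
  show "bary_embed ` geom_real order_complex \<subseteq> geom_real \<Delta>"
    using bary_embed_in_geom_real by blast
  show "continuous_on ({0..1} \<times> geom_real \<Delta>) retraction_homotopy"
    by (rule continuous_on_retraction_homotopy)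
  show "retraction_homotopy ` ({0..1} \<times> geom_real \<Delta>) \<subseteq> geom_real \<Delta>"
    using retraction_homotopy_in_geom_real by auto
  fix x assume "x \<in> geom_real \<Delta>"
  then show "retraction_homotopy (0, x) = x" "retraction_homotopy (1, x) \<in> bary_embed ` geom_real order_complex"
    using retract_coords_in_geom_real by (auto simp: retraction_homotopy_def)
next
  fix s y assume "y \<in> bary_embed ` geom_real order_complex"
  then show "retraction_homotopy (s, y) = y"
    by (auto simp: retraction_homotopy_def retract_coords_bary_embed algebra_simps)
qed

theorem bary_embed_image_homeomorphic:
  "bary_embed ` geom_real order_complex homeomorphic geom_real order_complex"
  unfolding homeomorphic_def
proof (intro exI[of _ bary_coords] exI[of _ bary_embed] homeomorphismI)
  show "continuous_on (bary_embed ` geom_real order_complex) bary_coords"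
    by (rule continuous_on_bary_coords)
  show "continuous_on (geom_real order_complex) bary_embed"
    by (rule continuous_on_bary_embed)
qed (auto simp: bary_coords_bary_embed)

end

lemma (in face_closure) ex_enumeration:
  obtains e where "enumerated_face_closure V \<Delta> c e (card (closed_faces \<Delta> c))"
proof -
  have "finite (closed_faces \<Delta> c)"
    using finite_faces by (simp add: closed_faces_def)
  then obtain e where "bij_betw e {..<card (closed_faces \<Delta> c)} (closed_faces \<Delta> c)"
    using ex_bij_betw_nat_finite atLeast0LessThan by metis
  then show ?thesis
    using that enumerated_face_closure.intro[OF face_closure_axioms] enumerated_face_closure_axioms.intro
    by blast
qed

section \<open>The neighbourhood complex of a K_{a,b}-free graph\<close>

definition common_nbhd :: "'v set \<Rightarrow> ('v \<Rightarrow> 'v \<Rightarrow> bool) \<Rightarrow> 'v set \<Rightarrow> 'v set" where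
  "common_nbhd V E \<sigma> = {w \<in> V. \<forall>u\<in>\<sigma>. E u w}"

definition nbhd_closure :: "'v set \<Rightarrow> ('v \<Rightarrow> 'v \<Rightarrow> bool) \<Rightarrow> 'v set \<Rightarrow> 'v set" where
  "nbhd_closure V E \<sigma> = common_nbhd V E (common_nbhd V E \<sigma>)"

lemma common_nbhd_antimono: "\<sigma> \<subseteq> \<tau> \<Longrightarrow> common_nbhd V E \<tau> \<subseteq> common_nbhd V E \<sigma>"
  unfolding common_nbhd_def by auto

lemma subset_nbhd_closure:
  assumes "\<And>u v. E u v \<Longrightarrow> E v u" "\<sigma> \<subseteq> V"
  shows "\<sigma> \<subseteq> nbhd_closure V E \<sigma>"
  using assms unfolding nbhd_closure_def common_nbhd_def by auto

lemma common_nbhd_nbhd_closure: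
  assumes "\<And>u v. E u v \<Longrightarrow> E v u" "\<sigma> \<subseteq> V"
  shows "common_nbhd V E (nbhd_closure V E \<sigma>) = common_nbhd V E \<sigma>"
proof
  show "common_nbhd V E (nbhd_closure V E \<sigma>) \<subseteq> common_nbhd V E \<sigma>"
    using subset_nbhd_closure[OF assms] by (rule common_nbhd_antimono)
  have "common_nbhd V E \<sigma> \<subseteq> V"
    by (auto simp: common_nbhd_def)
  then show "common_nbhd V E \<sigma> \<subseteq> common_nbhd V E (nbhd_closure V E \<sigma>)"
    using subset_nbhd_closure[OF assms(1)] by (simp add: nbhd_closure_def)
qed

lemma nbhd_complex_eq: "nbhd_complex V E = {\<sigma>. \<sigma> \<subseteq> V \<and> common_nbhd V E \<sigma> \<noteq> {}}"
  unfolding nbhd_complex_def common_nbhd_def by blast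

lemma face_closure_nbhd_closure:
  assumes "finite V" "\<And>u v. E u v \<Longrightarrow> E v u"
  shows "face_closure V (nbhd_complex V E) (nbhd_closure V E)"
proof
  fix \<sigma> assume "\<sigma> \<in> nbhd_complex V E"
  then have \<sigma>: "\<sigma> \<subseteq> V" "common_nbhd V E \<sigma> \<noteq> {}"
    by (auto simp: nbhd_complex_eq)
  have closure_V: "nbhd_closure V E \<sigma> \<subseteq> V"
    by (auto simp: nbhd_closure_def common_nbhd_def)
  show "\<sigma> \<subseteq> V"
    by (rule \<sigma>(1))
  show "\<tau> \<in> nbhd_complex V E" if "\<tau> \<subseteq> \<sigma>" for \<tau>
    using \<sigma> that common_nbhd_antimono[OF that, of V E] by (auto simp: nbhd_complex_eq)
  show "nbhd_closure V E \<sigma> \<in> nbhd_complex V E"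
    using \<sigma> closure_V common_nbhd_nbhd_closure[OF assms(2) \<sigma>(1)] by (simp add: nbhd_complex_eq)
  show "\<sigma> \<subseteq> nbhd_closure V E \<sigma>"
    using assms(2) \<sigma>(1) by (rule subset_nbhd_closure)
  show "nbhd_closure V E \<tau> \<subseteq> nbhd_closure V E \<sigma>" if "\<tau> \<subseteq> \<sigma>" for \<tau>
    unfolding nbhd_closure_def using that by (intro common_nbhd_antimono)
  show "nbhd_closure V E (nbhd_closure V E \<sigma>) = nbhd_closure V E \<sigma>"
    using common_nbhd_nbhd_closure[OF assms(2) closure_V] common_nbhd_nbhd_closure[OF assms(2) \<sigma>(1)]
    by (simp add: nbhd_closure_def)
qed (rule assms(1))

lemma card_chain_le:
  assumes "chain\<^sub>\<subseteq> F" "\<And>\<sigma>. \<sigma> \<in> F \<Longrightarrow> finite \<sigma> \<and> \<sigma> \<noteq> {} \<and> card \<sigma> \<le> m"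
  shows "card F \<le> m"
proof -
  have "inj_on card F"
  proof
    fix \<sigma> \<tau> assume "\<sigma> \<in> F" "\<tau> \<in> F" "card \<sigma> = card \<tau>"
    then show "\<sigma> = \<tau>"
      using assms card_subset_eq unfolding chain_subset_def by metis
  qed
  then have "card F = card (card ` F)"
    by (simp add: card_image)
  also have "\<dots> \<le> card {1..m}"
    using assms(2) by (intro card_mono) (auto simp: Suc_le_eq card_gt_0_iff)
  finally show ?thesis
    by simp
qed

lemma card_common_nbhd_less:
  assumes "\<not> contains_Kab V E a b" "\<And>v. \<not> E v v" "finite V" "\<sigma> \<subseteq> V" "a \<le> card \<sigma>"
  shows "card (common_nbhd V E \<sigma>) < b"
proof (rule ccontr)
  assume "\<not> card (common_nbhd V E \<sigma>) < b"
  then obtain B where B: "B \<subseteq> common_nbhd V E \<sigma>" "card B = b"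
    by (meson not_less obtain_subset_with_card_n)
  obtain A where A: "A \<subseteq> \<sigma>" "card A = a"
    using assms(5) by (meson obtain_subset_with_card_n)
  have "A \<subseteq> V" "B \<subseteq> V"
    using A(1) B(1) assms(4) by (auto simp: common_nbhd_def)
  moreover have "\<forall>x\<in>A. \<forall>y\<in>B. E x y"
    using A(1) B(1) by (auto simp: common_nbhd_def)
  moreover have "A \<inter> B = {}"
    using calculation(3) assms(2) by blast
  ultimately have "contains_Kab V E a b"
    unfolding contains_Kab_def using A(2) B(2) assms(3) finite_subset by metis
  with assms(1) show False ..
qed

lemma card_chain_large_closed_faces_le:
  assumes "finite V" "\<And>v. \<not> E v v" "\<not> contains_Kab V E a b"
    and "F \<subseteq> closed_faces (nbhd_complex V E) (nbhd_closure V E)" "chain\<^sub>\<subseteq> F"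
    and "\<And>\<sigma>. \<sigma> \<in> F \<Longrightarrow> a \<le> card \<sigma>"
  shows "card F \<le> b - 1"
proof -
  have F: "\<sigma> \<subseteq> V" "common_nbhd V E \<sigma> \<noteq> {}" "nbhd_closure V E \<sigma> = \<sigma>" if "\<sigma> \<in> F" for \<sigma>
    using assms(4) that by (auto simp: closed_faces_def nbhd_complex_eq)
  have "inj_on (common_nbhd V E) F"
    using F(3) by (intro inj_onI) (metis nbhd_closure_def)
  then have "card F = card (common_nbhd V E ` F)"
    by (simp add: card_image)
  also have "\<dots> \<le> b - 1"
  proof (rule card_chain_le)
    show "chain\<^sub>\<subseteq> (common_nbhd V E ` F)"
    proof (rule chain_subset_imageI)
      fix \<sigma> \<tau> assume "\<sigma> \<in> F" "\<tau> \<in> F"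
      then have "\<sigma> \<subseteq> \<tau> \<or> \<tau> \<subseteq> \<sigma>"
        using assms(5) by (auto simp: chain_subset_def)
      then show "common_nbhd V E \<sigma> \<subseteq> common_nbhd V E \<tau> \<or> common_nbhd V E \<tau> \<subseteq> common_nbhd V E \<sigma>"
        using common_nbhd_antimono by blast
    qed
    fix \<nu> assume "\<nu> \<in> common_nbhd V E ` F"
    then obtain \<sigma> where "\<sigma> \<in> F" "\<nu> = common_nbhd V E \<sigma>"
      by blast
    then have "card \<nu> < b" "\<nu> \<noteq> {}" "finite \<nu>"
      using card_common_nbhd_less[OF assms(3,2,1) F(1)] assms(1,6) F(2)
      by (auto simp: common_nbhd_def)
    then show "finite \<nu> \<and> \<nu> \<noteq> {} \<and> card \<nu> \<le> b - 1"
      by linarith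
  qed
  finally show ?thesis .
qed

lemma card_chain_closed_faces_le:
  assumes "finite_simple_graph V E" "\<not> contains_Kab V E a b" "1 \<le> a" "1 \<le> b"
    and "F \<subseteq> closed_faces (nbhd_complex V E) (nbhd_closure V E)" "chain\<^sub>\<subseteq> F"
  shows "card F \<le> a + b - 2"
proof -
  have V: "finite V" "\<And>v. \<not> E v v"
    using assms(1) by (auto simp: finite_simple_graph_def)
  have F: "finite \<sigma>" "\<sigma> \<noteq> {}" if "\<sigma> \<in> F" for \<sigma>
    using assms(5) that V(1) finite_subset by (auto simp: closed_faces_def nbhd_complex_eq)
  define F1 where "F1 = {\<sigma> \<in> F. card \<sigma> < a}"
  define F2 where "F2 = {\<sigma> \<in> F. a \<le> card \<sigma>}"
  have "card F1 \<le> a - 1"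
    using chain_subset_subset[OF assms(6)] F by (intro card_chain_le) (auto simp: F1_def)
  moreover have "card F2 \<le> b - 1"
    using V assms(2,5) chain_subset_subset[OF assms(6)]
    by (intro card_chain_large_closed_faces_le) (auto simp: F2_def)
  moreover have "F = F1 \<union> F2"
    by (auto simp: F1_def F2_def)
  then have "card F \<le> card F1 + card F2"
    by (simp add: card_Un_le)
  ultimately show ?thesis
    using assms(3,4) by linarith
qed

theorem lemma2p3:
  fixes V :: "'v set" and E :: "'v \<Rightarrow> 'v \<Rightarrow> bool" and a b :: nat
  assumes "a \<ge> 1" and "b \<ge> 1"
    and "finite_simple_graph V E"
    and "\<not> contains_Kab V E a b"
  shows "\<exists>A (K :: nat set set).
           strong_deformation_retract_of A (geom_real (nbhd_complex V E)) \<and>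
           finite_simplicial_complex K \<and> faces_card_le K (a + b - 2) \<and>
           A homeomorphic geom_real K"
proof -
  let ?\<Delta> = "nbhd_complex V E" and ?c = "nbhd_closure V E"
  have "finite V" "\<And>u v. E u v \<Longrightarrow> E v u"
    using assms(3) by (auto simp: finite_simple_graph_def)
  then interpret face_closure V ?\<Delta> ?c
    by (rule face_closure_nbhd_closure)
  obtain e where "enumerated_face_closure V ?\<Delta> ?c e (card (closed_faces ?\<Delta> ?c))"
    by (rule ex_enumeration)
  then interpret enumerated_face_closure V ?\<Delta> ?c e "card (closed_faces ?\<Delta> ?c)" .
  have "faces_card_le order_complex (a + b - 2)"
    unfolding faces_card_le_def
    using order_complex_chain card_chain_closed_faces_le[OF assms(3,4,1,2)] by metis
  then show ?thesis
    using strong_deformation_retract_bary_embed finite_simplicial_complex_order_complex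
      bary_embed_image_homeomorphic by blast
qed

end
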